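(* Let $[Z_i(\tau_i,u_i)]_{i=1}^N$ be per-agent return distributions with quantile functions $\theta_i(\tau_i,u_i,\omega)$, let $k_1,\dots,k_N\ge0$ be constants not depending on the joint action $\boldsymbol u$, and let $Z_{jt}(\boldsymbol\tau,\boldsymbol u)$ be a joint return distribution (e.g. represented as a mixture of Dirac masses $\sum_{j=1}^J p_j(\boldsymbol\tau,\boldsymbol u,\omega_j)\delta_{\theta(\boldsymbol\tau,\boldsymbol u,\omega_j)}$) whose quantile function is $$\theta(\boldsymbol\tau,\boldsymbol u,\omega)=\sum_{i=1}^N k_i\,\theta_i(\tau_i,u_i,\omega),\qquad \omega\in(0,1].$$ Let $\psi_\alpha$ be either a Value-at-Risk metric $\mathrm{VaR}_\alpha$ or a distortion risk measure (e.g. CVaR, Wang, CPW). Then $[Z_i]_{i=1}^N$ satisfy the RIGM principle for $Z_{jt}$ with risk metric $\psi_\alpha$, i.e. $\arg\max_{\boldsymbol u}\psi_\alpha[Z_{jt}(\boldsymbol\tau,\boldsymbol u)]=(\arg\max_{u_1}\psi_\alpha[Z_1(\tau_1,u_1)],\dots,\arg\max_{u_N}\psi_\alpha[Z_N(\tau_N,u_N)])$.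
   Context: There are $N$ agents; agent $i$ has observation history $\tau_i$ and a finite action set $U_i$; $\boldsymbol\tau=(\tau_1,\dots,\tau_N)$, $\boldsymbol u=(u_1,\dots,u_N)$. For a real random variable $Z$ with CDF $F_Z$, its quantile function is $\theta_Z(\omega)=\inf\{z\in\mathbb{R}:\omega\le F_Z(z)\}$, $\omega\in(0,1]$. $\mathrm{VaR}_\alpha(Z)=\theta_Z(\alpha)$. A distortion risk measure with differentiable distortion function $g:[0,1]\to[0,1]$ is $\psi(Z)=\int_0^1 g'(\omega)\theta_Z(\omega)\,d\omega$ (integrals assumed finite); examples: CVaR with $g(\omega)=\min(\omega/\alpha,1)$, Wang with $g(\omega)=\Phi_{\mathcal N}(\Phi_{\mathcal N}^{-1}(\omega)+\alpha)$ ($\Phi_{\mathcal N}$ the standard Gaussian CDF), CPW with $g(\omega)=\omega^\alpha/(\omega^\alpha+(1-\omega)^\alpha)^{1/\alpha}$. RIGM principle: as in the displayed equality of the claim. Standing assumption of the paper: argmax sets are singletons (ties broken by smallest index). *)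

theory Defs
  imports "HOL-Probability.Probability"
begin

definition quantile :: "real measure \<Rightarrow> real \<Rightarrow> real" where
  "quantile M \<omega> = Inf {z. \<omega> \<le> measure M {..z}}"

definition VaR :: "real \<Rightarrow> real measure \<Rightarrow> real" where
  "VaR \<alpha> M = quantile M \<alpha>"

definition distortion_risk :: "(real \<Rightarrow> real) \<Rightarrow> real measure \<Rightarrow> real" where
  "distortion_risk g' M = (LBINT \<omega>=0..1. g' \<omega> * quantile M \<omega>)"

definition distortion_fun :: "(real \<Rightarrow> real) \<Rightarrow> (real \<Rightarrow> real) \<Rightarrow> bool" where
  "distortion_fun g g' \<longleftrightarrow> g ` {0..1} \<subseteq> {0..1} \<and>
     (\<forall>\<omega>\<in>{0..1}. (g has_real_derivative g' \<omega>) (at \<omega> within {0..1}))"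

definition argmax_set :: "('a \<Rightarrow> real) \<Rightarrow> 'a set \<Rightarrow> 'a set" where
  "argmax_set f A = {x \<in> A. \<forall>y\<in>A. f y \<le> f x}"

end

theory Submission
  imports Defs
begin

text \<open>VaR and distortion risk measures are linear functionals of the quantile function, so the
  risk of a joint action is the k-weighted sum of the individual risks. With nonnegative weights,
  the tuple of individual maximisers maximises this sum; as the joint maximiser is unique, it is
  that tuple.\<close>

lemma set_integral_sum:
  fixes f :: "'i \<Rightarrow> 'a \<Rightarrow> real"
  assumes "\<And>i. i \<in> I \<Longrightarrow> set_integrable M A (f i)"
  shows "(LINT x:A|M. (\<Sum>i\<in>I. f i x)) = (\<Sum>i\<in>I. LINT x:A|M. f i x)"
  using assms unfolding set_lebesgue_integral_def set_integrable_def
  by (simp add: sum_distrib_left integral_sum)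

lemma distortion_risk_eq_set_integral:
  "distortion_risk g' M = (LINT \<omega>:{0<..<1}|lborel. g' \<omega> * quantile M \<omega>)"
  unfolding distortion_risk_def interval_lebesgue_integral_def
  using einterval_eq_Icc(1)[of 0 1] by (simp add: zero_ereal_def one_ereal_def)

lemma VaR_quantile_combination:
  assumes "\<alpha> \<in> {0<..1}"
    and "\<And>\<omega>. \<omega> \<in> {0<..1} \<Longrightarrow> quantile M \<omega> = (\<Sum>i\<in>I. k i * quantile (Ms i) \<omega>)"
  shows "VaR \<alpha> M = (\<Sum>i\<in>I. k i * VaR \<alpha> (Ms i))"
  using assms by (simp add: VaR_def)

lemma distortion_risk_quantile_combination:
  assumes comb: "\<And>\<omega>. \<omega> \<in> {0<..1} \<Longrightarrow> quantile M \<omega> = (\<Sum>i\<in>I. k i * quantile (Ms i) \<omega>)"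
    and integrable: "\<And>i. i \<in> I \<Longrightarrow> set_integrable lborel {0..1} (\<lambda>\<omega>. g' \<omega> * quantile (Ms i) \<omega>)"
  shows "distortion_risk g' M = (\<Sum>i\<in>I. k i * distortion_risk g' (Ms i))"
proof -
  have integrable': "set_integrable lborel {0<..<1} (\<lambda>\<omega>. k i * (g' \<omega> * quantile (Ms i) \<omega>))"
    if "i \<in> I" for i
    by (intro set_integrable_mult_right set_integrable_subset[OF integrable[OF that]]) auto
  have "distortion_risk g' M = (LINT \<omega>:{0<..<1}|lborel. (\<Sum>i\<in>I. k i * (g' \<omega> * quantile (Ms i) \<omega>)))"
    unfolding distortion_risk_eq_set_integral
    by (rule set_lebesgue_integral_cong) (auto simp: comb sum_distrib_left algebra_simps)
  also have "\<dots> = (\<Sum>i\<in>I. k i * distortion_risk g' (Ms i))"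
    by (simp add: set_integral_sum[OF integrable'] distortion_risk_eq_set_integral)
  finally show ?thesis .
qed

lemma PiE_argmax_subset_argmax_weighted_sum:
  assumes "\<And>i. i \<in> I \<Longrightarrow> k i \<ge> 0"
  shows "PiE I (\<lambda>i. argmax_set (f i) (U i))
         \<subseteq> argmax_set (\<lambda>u. \<Sum>i\<in>I. k i * f i (u i)) (PiE I U)"
proof
  fix b assume b: "b \<in> PiE I (\<lambda>i. argmax_set (f i) (U i))"
  then have "b \<in> PiE I U"
    by (auto simp: argmax_set_def PiE_iff)
  moreover have "(\<Sum>i\<in>I. k i * f i (u i)) \<le> (\<Sum>i\<in>I. k i * f i (b i))" if "u \<in> PiE I U" for u
    using b that assms by (intro sum_mono mult_left_mono) (auto simp: argmax_set_def PiE_iff)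
  ultimately show "b \<in> argmax_set (\<lambda>u. \<Sum>i\<in>I. k i * f i (u i)) (PiE I U)"
    by (simp add: argmax_set_def)
qed

lemma argmax_set_cong:
  assumes "\<And>x. x \<in> A \<Longrightarrow> f x = g x"
  shows "argmax_set f A = argmax_set g A"
  using assms by (auto simp: argmax_set_def)

theorem theorem4:
  fixes N :: nat
    and U :: "nat \<Rightarrow> 'a set"
    and \<tau> :: "nat \<Rightarrow> 'o"
    and Z :: "nat \<Rightarrow> 'o \<Rightarrow> 'a \<Rightarrow> real measure"
    and Zjt :: "(nat \<Rightarrow> 'o) \<Rightarrow> (nat \<Rightarrow> 'a) \<Rightarrow> real measure"
    and k :: "nat \<Rightarrow> real"
    and \<psi> :: "real measure \<Rightarrow> real"
  assumes finU: "\<And>i. i < N \<Longrightarrow> finite (U i)"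
    and distZ: "\<And>i a. i < N \<Longrightarrow> a \<in> U i \<Longrightarrow>
                  prob_space (Z i (\<tau> i) a) \<and> sets (Z i (\<tau> i) a) = sets borel"
    and distZjt: "\<And>u. u \<in> PiE {..<N} U \<Longrightarrow>
                  prob_space (Zjt \<tau> u) \<and> sets (Zjt \<tau> u) = sets borel"
    and k_nonneg: "\<And>i. i < N \<Longrightarrow> k i \<ge> 0"
    and quant: "\<And>u \<omega>. u \<in> PiE {..<N} U \<Longrightarrow> \<omega> \<in> {0<..1} \<Longrightarrow>
                  quantile (Zjt \<tau> u) \<omega> = (\<Sum>i<N. k i * quantile (Z i (\<tau> i) (u i)) \<omega>)"
    and risk: "(\<exists>\<alpha>\<in>{0<..1}. \<psi> = VaR \<alpha>) \<or>
               (\<exists>g g'. distortion_fun g g' \<and> \<psi> = distortion_risk g' \<and>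
                  (\<forall>i<N. \<forall>a\<in>U i. set_integrable lborel {0..1}
                        (\<lambda>\<omega>. g' \<omega> * quantile (Z i (\<tau> i) a) \<omega>)) \<and>
                  (\<forall>u\<in>PiE {..<N} U. set_integrable lborel {0..1}
                        (\<lambda>\<omega>. g' \<omega> * quantile (Zjt \<tau> u) \<omega>)))"
    and single_jt: "\<exists>v. argmax_set (\<lambda>u. \<psi> (Zjt \<tau> u)) (PiE {..<N} U) = {v}"
    and single_i: "\<And>i. i < N \<Longrightarrow> \<exists>b. argmax_set (\<lambda>a. \<psi> (Z i (\<tau> i) a)) (U i) = {b}"
  shows "argmax_set (\<lambda>u. \<psi> (Zjt \<tau> u)) (PiE {..<N} U)
         = PiE {..<N} (\<lambda>i. argmax_set (\<lambda>a. \<psi> (Z i (\<tau> i) a)) (U i))"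
proof -
  have risk_sum: "\<psi> (Zjt \<tau> u) = (\<Sum>i<N. k i * \<psi> (Z i (\<tau> i) (u i)))"
    if u: "u \<in> PiE {..<N} U" for u
    using risk VaR_quantile_combination[OF _ quant[OF u]]
      distortion_risk_quantile_combination[OF quant[OF u]] u
    by (auto simp: PiE_iff)
  obtain b where b: "\<And>i. i < N \<Longrightarrow> argmax_set (\<lambda>a. \<psi> (Z i (\<tau> i) a)) (U i) = {b i}"
    using single_i by metis
  have individual: "PiE {..<N} (\<lambda>i. argmax_set (\<lambda>a. \<psi> (Z i (\<tau> i) a)) (U i)) = {restrict b {..<N}}"
    using b by (simp add: PiE_eq_singleton)
  have "PiE {..<N} (\<lambda>i. argmax_set (\<lambda>a. \<psi> (Z i (\<tau> i) a)) (U i))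
        \<subseteq> argmax_set (\<lambda>u. \<psi> (Zjt \<tau> u)) (PiE {..<N} U)"
    using PiE_argmax_subset_argmax_weighted_sum[of "{..<N}" k] k_nonneg
    by (simp add: argmax_set_cong[OF risk_sum])
  then show ?thesis
    using single_jt individual by auto
qed

end
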